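(* Let $G$ be a cactus. Then $G$ is in $B_0$ if and only if $G$ contains none of $M_2$, $M_3$, and $C_r$ for any $r\ge 4$ as an induced subgraph.
   Context: A cactus is a connected graph in which any two simple cycles have at most one vertex in common. $C_r$ denotes the cycle on $r$ vertices. $M_2$ is the graph on vertices $a,b,c,d,e,f,g$ with edges $ab,ac,ad,be,cf,dg$. $M_3$ is the graph on vertices $a,b,c,d,e,f$ with edges $ab,ac,bc,ad,be,cf$. $B_0$ is the class of graphs having an EPG representation (a set of paths on a rectangular grid, one per vertex, two vertices adjacent iff their paths share a grid edge) in which no path has a bend. *)

theory Defs
  imports Main
begin

definition simple_graph :: "'a set \<Rightarrow> ('a \<Rightarrow> 'a \<Rightarrow> bool) \<Rightarrow> bool" where
  "simple_graph V E \<longleftrightarrow> finite V \<and> (\<forall>u v. E u v \<longrightarrow> u \<in> V \<and> v \<in> V) \<and>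
     (\<forall>u v. E u v \<longrightarrow> E v u) \<and> (\<forall>u. \<not> E u u)"

definition graph_connected :: "'a set \<Rightarrow> ('a \<Rightarrow> 'a \<Rightarrow> bool) \<Rightarrow> bool" where
  "graph_connected V E \<longleftrightarrow> V \<noteq> {} \<and>
     (\<forall>u\<in>V. \<forall>v\<in>V. (\<lambda>x y. E x y \<and> x \<in> V \<and> y \<in> V)\<^sup>*\<^sup>* u v)"

definition simple_cycle :: "'a set \<Rightarrow> ('a \<Rightarrow> 'a \<Rightarrow> bool) \<Rightarrow> 'a list \<Rightarrow> bool" where
  "simple_cycle V E xs \<longleftrightarrow> length xs \<ge> 3 \<and> distinct xs \<and> set xs \<subseteq> V \<and>
     (\<forall>i < length xs. E (xs ! i) (xs ! ((i + 1) mod length xs)))"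

definition cycle_edges :: "'a list \<Rightarrow> 'a set set" where
  "cycle_edges xs = {{xs ! i, xs ! ((i + 1) mod length xs)} | i. i < length xs}"

definition cactus :: "'a set \<Rightarrow> ('a \<Rightarrow> 'a \<Rightarrow> bool) \<Rightarrow> bool" where
  "cactus V E \<longleftrightarrow> graph_connected V E \<and>
     (\<forall>xs ys. simple_cycle V E xs \<and> simple_cycle V E ys \<and> cycle_edges xs \<noteq> cycle_edges ys
        \<longrightarrow> card (set xs \<inter> set ys) \<le> 1)"

definition induced_subgraph :: "'b set \<Rightarrow> ('b \<Rightarrow> 'b \<Rightarrow> bool) \<Rightarrow> 'a set \<Rightarrow> ('a \<Rightarrow> 'a \<Rightarrow> bool) \<Rightarrow> bool" where
  "induced_subgraph VH EH V E \<longleftrightarrow> (\<exists>f. inj_on f VH \<and> f ` VH \<subseteq> V \<and>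
     (\<forall>u\<in>VH. \<forall>v\<in>VH. EH u v \<longleftrightarrow> E (f u) (f v)))"

definition cycle_V :: "nat \<Rightarrow> nat set" where "cycle_V r = {..<r}"
definition cycle_E :: "nat \<Rightarrow> nat \<Rightarrow> nat \<Rightarrow> bool" where
  "cycle_E r u v \<longleftrightarrow> u < r \<and> v < r \<and> u \<noteq> v \<and> (v = (u + 1) mod r \<or> u = (v + 1) mod r)"

text \<open>M2: a,b,c,d,e,f,g = 0..6; edges ab,ac,ad,be,cf,dg.\<close>
definition M2_V :: "nat set" where "M2_V = {..<7}"
definition M2_E :: "nat \<Rightarrow> nat \<Rightarrow> bool" where
  "M2_E u v \<longleftrightarrow> {u, v} \<in> {{0,1},{0,2},{0,3},{1,4},{2,5},{3,6}}"

text \<open>M3: a,b,c,d,e,f = 0..5; edges ab,ac,bc,ad,be,cf.\<close>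
definition M3_V :: "nat set" where "M3_V = {..<6}"
definition M3_E :: "nat \<Rightarrow> nat \<Rightarrow> bool" where
  "M3_E u v \<longleftrightarrow> {u, v} \<in> {{0,1},{0,2},{1,2},{0,3},{1,4},{2,5}}"

text \<open>Grid edges of the integer grid are unordered pairs of unit-distance lattice points.
  A path with no bend is a horizontal or vertical segment of positive length, given by
  its set of grid edges.\<close>
definition hseg_edges :: "int \<Rightarrow> int \<Rightarrow> int \<Rightarrow> (int \<times> int) set set" where
  "hseg_edges x1 x2 y = {{(i, y), (i + 1, y)} | i. x1 \<le> i \<and> i < x2}"
definition vseg_edges :: "int \<Rightarrow> int \<Rightarrow> int \<Rightarrow> (int \<times> int) set set" where
  "vseg_edges x y1 y2 = {{(x, j), (x, j + 1)} | j. y1 \<le> j \<and> j < y2}"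

definition bendless_path :: "(int \<times> int) set set \<Rightarrow> bool" where
  "bendless_path P \<longleftrightarrow> (\<exists>x1 x2 y. x1 < x2 \<and> P = hseg_edges x1 x2 y) \<or>
                       (\<exists>x y1 y2. y1 < y2 \<and> P = vseg_edges x y1 y2)"

definition B0_EPG :: "'a set \<Rightarrow> ('a \<Rightarrow> 'a \<Rightarrow> bool) \<Rightarrow> bool" where
  "B0_EPG V E \<longleftrightarrow> (\<exists>P :: 'a \<Rightarrow> (int \<times> int) set set.
     (\<forall>v\<in>V. bendless_path (P v)) \<and>
     (\<forall>u\<in>V. \<forall>v\<in>V. u \<noteq> v \<longrightarrow> (E u v \<longleftrightarrow> P u \<inter> P v \<noteq> {})))"

end

theory Submission
  imports Defs
begin

text \<open>
  Bendless grid paths that share a grid edge lie on the same grid line, so in a connected B0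
  graph all paths lie on one line and the graph is an interval graph. Since B0 is closed under
  induced subgraphs and M2, M3 and the cycles C_r with r \<ge> 4 are connected but not interval
  graphs, no B0 graph contains them as induced subgraphs.

  Conversely, fix a longest induced path p_0 ... p_(n-1) of an obstruction-free cactus.
  Induced cycles of length at least four, the cactus property (two triangles share at most
  one vertex), the maximality of the path and the absence of M2 and M3 force every other
  vertex to be adjacent either to a single p_i or to both ends of one path edge p_i p_(i+1),
  the apex of that edge; each edge has at most one apex, adjacent off-path vertices form a
  triangle with a common p_i, and no off-path vertex has two off-path neighbours. Such a graph
  is an interval graph on one grid line: p_k gets the segment from kW to (k+1)W + 1, the apex
  of p_k p_(k+1) the unit segment where the segments of p_k and p_(k+1) overlap, and the other
  vertices attached at p_i disjoint unit segments strictly inside that of p_i, one for each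
  such vertex or adjacent pair.
\<close>

section \<open>Bendless paths and interval representations\<close>

text \<open>A grid line is represented by the map sending a < b to the grid edges of its segment
  between coordinates a and b.\<close>

definition grid_line :: "(int \<Rightarrow> int \<Rightarrow> (int \<times> int) set set) \<Rightarrow> bool" where
  "grid_line seg \<longleftrightarrow> (\<exists>y. seg = (\<lambda>a b. hseg_edges a b y)) \<or> (\<exists>x. seg = vseg_edges x)"

definition on_line :: "(int \<Rightarrow> int \<Rightarrow> (int \<times> int) set set) \<Rightarrow> (int \<times> int) set set \<Rightarrow> bool" where
  "on_line seg P \<longleftrightarrow> (\<exists>a b. a < b \<and> P = seg a b)"

lemma grid_line_cases:
  assumes "grid_line seg"
  obtains y where "seg = (\<lambda>a b. hseg_edges a b y)" | x where "seg = vseg_edges x"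
  using assms unfolding grid_line_def by blast

lemma grid_line_Int_nonempty_iff:
  assumes "grid_line seg"
  shows "seg a b \<inter> seg c d \<noteq> {} \<longleftrightarrow> max a c < min b d"
proof
  assume "seg a b \<inter> seg c d \<noteq> {}"
  then show "max a c < min b d"
    by (cases rule: grid_line_cases[OF assms])
      (auto simp: hseg_edges_def vseg_edges_def doubleton_eq_iff)
next
  assume "max a c < min b d"
  then have "a \<le> max a c" "c \<le> max a c" "max a c < b" "max a c < d"
    by auto
  then have "seg (max a c) (max a c + 1) \<subseteq> seg a b \<inter> seg c d"
    by (cases rule: grid_line_cases[OF assms]) (force simp: hseg_edges_def vseg_edges_def)+
  moreover have "seg k (k + 1) \<noteq> {}" for k
    by (cases rule: grid_line_cases[OF assms]) (auto simp: hseg_edges_def vseg_edges_def)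
  ultimately show "seg a b \<inter> seg c d \<noteq> {}"
    by blast
qed

lemma on_line_nonempty:
  assumes "grid_line seg" "on_line seg P"
  shows "P \<noteq> {}"
proof -
  obtain a b where "a < b" "P = seg a b"
    using assms(2) unfolding on_line_def by blast
  then show ?thesis
    using grid_line_Int_nonempty_iff[OF assms(1), of a b a b] by simp
qed

lemma bendless_path_iff_on_line: "bendless_path P \<longleftrightarrow> (\<exists>seg. grid_line seg \<and> on_line seg P)"
  unfolding bendless_path_def grid_line_def on_line_def by blast

lemma grid_lines_disjoint:
  "y \<noteq> y' \<Longrightarrow> hseg_edges a b y \<inter> hseg_edges c d y' = {}"
  "x \<noteq> x' \<Longrightarrow> vseg_edges x a b \<inter> vseg_edges x' c d = {}"
  "hseg_edges a b y \<inter> vseg_edges x c d = {}"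
  unfolding hseg_edges_def vseg_edges_def by (auto simp: doubleton_eq_iff)

lemma on_line_if_meets:
  assumes "grid_line seg" "on_line seg P" "bendless_path Q" "P \<inter> Q \<noteq> {}"
  shows "on_line seg Q"
proof -
  obtain a b where P: "P = seg a b"
    using assms(2) unfolding on_line_def by blast
  from assms(3) obtain c d where "c < d"
    and Q: "(\<exists>y. Q = hseg_edges c d y) \<or> (\<exists>x. Q = vseg_edges x c d)"
    unfolding bendless_path_def by blast
  have "Q = seg c d"
  proof (cases rule: grid_line_cases[OF assms(1)])
    case (1 y)
    with P assms(4) have "Q \<inter> hseg_edges a b y \<noteq> {}"
      by auto
    with Q show ?thesis
      using grid_lines_disjoint(1,3) 1 by (metis Int_commute)
  next
    case (2 x)
    with P assms(4) have "Q \<inter> vseg_edges x a b \<noteq> {}"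
      by auto
    with Q show ?thesis
      using grid_lines_disjoint(2,3) 2 by metis
  qed
  with \<open>c < d\<close> show ?thesis
    unfolding on_line_def by blast
qed

definition interval_rep :: "'a set \<Rightarrow> ('a \<Rightarrow> 'a \<Rightarrow> bool) \<Rightarrow> ('a \<Rightarrow> int) \<Rightarrow> ('a \<Rightarrow> int) \<Rightarrow> bool" where
  "interval_rep V E lo hi \<longleftrightarrow> (\<forall>v\<in>V. lo v < hi v) \<and>
     (\<forall>u\<in>V. \<forall>v\<in>V. u \<noteq> v \<longrightarrow> (E u v \<longleftrightarrow> lo u < hi v \<and> lo v < hi u))"

lemma interval_rep_imp_B0_EPG:
  assumes "interval_rep V E lo hi"
  shows "B0_EPG V E"
  unfolding B0_EPG_def
proof (intro exI conjI ballI impI)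
  have line: "grid_line (\<lambda>a b. hseg_edges a b 0)"
    unfolding grid_line_def by blast
  fix u v assume "u \<in> V" "v \<in> V" "u \<noteq> v"
  with assms show "E u v \<longleftrightarrow> hseg_edges (lo u) (hi u) 0 \<inter> hseg_edges (lo v) (hi v) 0 \<noteq> {}"
    unfolding interval_rep_def using grid_line_Int_nonempty_iff[OF line] by auto
next
  fix v assume "v \<in> V"
  with assms show "bendless_path (hseg_edges (lo v) (hi v) 0)"
    unfolding interval_rep_def bendless_path_def by blast
qed

lemma B0_EPG_induced_subgraph:
  assumes "B0_EPG V E" "induced_subgraph VH EH V E"
  shows "B0_EPG VH EH"
proof -
  obtain P where P: "\<forall>v\<in>V. bendless_path (P v)"
     "\<forall>u\<in>V. \<forall>v\<in>V. u \<noteq> v \<longrightarrow> (E u v \<longleftrightarrow> P u \<inter> P v \<noteq> {})"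
    using assms(1) unfolding B0_EPG_def by blast
  obtain f where f: "inj_on f VH" "f ` VH \<subseteq> V" "\<forall>u\<in>VH. \<forall>v\<in>VH. EH u v \<longleftrightarrow> E (f u) (f v)"
    using assms(2) unfolding induced_subgraph_def by blast
  have "\<forall>u\<in>VH. \<forall>v\<in>VH. u \<noteq> v \<longrightarrow> (EH u v \<longleftrightarrow> P (f u) \<inter> P (f v) \<noteq> {})"
  proof (intro ballI impI)
    fix u v assume "u \<in> VH" "v \<in> VH" "u \<noteq> v"
    with f have "f u \<in> V" "f v \<in> V" "f u \<noteq> f v" "EH u v \<longleftrightarrow> E (f u) (f v)"
      by (auto simp: inj_on_def)
    with P(2) show "EH u v \<longleftrightarrow> P (f u) \<inter> P (f v) \<noteq> {}" by blast
  qed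
  moreover have "\<forall>v\<in>VH. bendless_path (P (f v))"
    using P(1) f(2) by auto
  ultimately show ?thesis
    unfolding B0_EPG_def by (intro exI[of _ "P \<circ> f"]) simp
qed

abbreviation reachable :: "'a set \<Rightarrow> ('a \<Rightarrow> 'a \<Rightarrow> bool) \<Rightarrow> 'a \<Rightarrow> 'a \<Rightarrow> bool" where
  "reachable V E \<equiv> (\<lambda>x y. E x y \<and> x \<in> V \<and> y \<in> V)\<^sup>*\<^sup>*"

lemma reachable_edge: "reachable V E w u \<Longrightarrow> E u v \<Longrightarrow> u \<in> V \<Longrightarrow> v \<in> V \<Longrightarrow> reachable V E w v"
  by (simp add: rtranclp.rtrancl_into_rtrancl)

lemma rtranclp_exits_set:
  assumes "R\<^sup>*\<^sup>* a b" "a \<in> S" "b \<notin> S"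
  shows "\<exists>x y. R x y \<and> x \<in> S \<and> y \<notin> S"
  using assms by (induction rule: rtranclp_induct) auto

lemma B0_EPG_connected_imp_interval_rep:
  assumes "B0_EPG V E" "w \<in> V" "\<And>v. v \<in> V \<Longrightarrow> reachable V E w v"
  shows "\<exists>lo hi. interval_rep V E lo hi"
proof -
  obtain P where P: "\<forall>v\<in>V. bendless_path (P v)"
     "\<forall>u\<in>V. \<forall>v\<in>V. u \<noteq> v \<longrightarrow> (E u v \<longleftrightarrow> P u \<inter> P v \<noteq> {})"
    using assms(1) unfolding B0_EPG_def by blast
  obtain seg where seg: "grid_line seg" "on_line seg (P w)"
    using P(1) assms(2) bendless_path_iff_on_line by blast
  have "on_line seg (P v)" if "reachable V E w v" for v
    using that
  proof (induction rule: rtranclp_induct)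
    case (step u v)
    then have "P u \<inter> P v \<noteq> {}"
      using P on_line_nonempty[OF seg(1)] by (cases "u = v") auto
    with step show ?case
      using P(1) on_line_if_meets[OF seg(1)] by blast
  qed (rule seg(2))
  then have "\<forall>v\<in>V. \<exists>ab. fst ab < snd ab \<and> P v = seg (fst ab) (snd ab)"
    using assms(3) unfolding on_line_def by fastforce
  then obtain ends
    where ends: "\<forall>v\<in>V. fst (ends v) < snd (ends v) \<and> P v = seg (fst (ends v)) (snd (ends v))"
    by metis
  have "interval_rep V E (fst \<circ> ends) (snd \<circ> ends)"
    unfolding interval_rep_def using ends P(2) grid_line_Int_nonempty_iff[OF seg(1)] by auto
  then show ?thesis by blast
qed

section \<open>The obstructions are not B0\<close>

lemma M2_not_interval_rep: "\<not> interval_rep M2_V M2_E lo hi"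
proof
  assume rep: "interval_rep M2_V M2_E lo hi"
  then have pos: "lo u < hi u" if "u < 7" for u
    using that unfolding interval_rep_def M2_V_def by auto
  from rep have meet: "lo u < hi v \<and> lo v < hi u \<longleftrightarrow> M2_E u v" if "u < 7" "v < 7" "u \<noteq> v" for u v
    using that unfolding interval_rep_def M2_V_def by auto
  have "lo 1 < hi 1" "lo 2 < hi 2" "lo 3 < hi 3"
    "lo 0 < hi 1 \<and> lo 1 < hi 0" "lo 0 < hi 2 \<and> lo 2 < hi 0" "lo 0 < hi 3 \<and> lo 3 < hi 0"
    "\<not> (lo 1 < hi 2 \<and> lo 2 < hi 1)" "\<not> (lo 1 < hi 3 \<and> lo 3 < hi 1)" "\<not> (lo 2 < hi 3 \<and> lo 3 < hi 2)"
    "lo 1 < hi 4 \<and> lo 4 < hi 1" "lo 2 < hi 5 \<and> lo 5 < hi 2" "lo 3 < hi 6 \<and> lo 6 < hi 3"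
    "\<not> (lo 0 < hi 4 \<and> lo 4 < hi 0)" "\<not> (lo 0 < hi 5 \<and> lo 5 < hi 0)" "\<not> (lo 0 < hi 6 \<and> lo 6 < hi 0)"
    using pos meet by (simp_all add: M2_E_def doubleton_eq_iff)
  \<comment> \<open>the middle one of the disjoint intervals of 1, 2, 3 lies within that of 0,
    so its pendant meets 0\<close>
  then show False
    by (auto simp: not_less)
qed

lemma M3_not_interval_rep: "\<not> interval_rep M3_V M3_E lo hi"
proof
  assume rep: "interval_rep M3_V M3_E lo hi"
  then have pos: "lo u < hi u" if "u < 6" for u
    using that unfolding interval_rep_def M3_V_def by auto
  from rep have meet: "lo u < hi v \<and> lo v < hi u \<longleftrightarrow> M3_E u v" if "u < 6" "v < 6" "u \<noteq> v" for u v
    using that unfolding interval_rep_def M3_V_def by auto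
  have "lo 0 < hi 0" "lo 1 < hi 1" "lo 2 < hi 2" "lo 3 < hi 3" "lo 4 < hi 4" "lo 5 < hi 5"
    "lo 0 < hi 1 \<and> lo 1 < hi 0" "lo 0 < hi 2 \<and> lo 2 < hi 0" "lo 1 < hi 2 \<and> lo 2 < hi 1"
    "lo 0 < hi 3 \<and> lo 3 < hi 0" "lo 1 < hi 4 \<and> lo 4 < hi 1" "lo 2 < hi 5 \<and> lo 5 < hi 2"
    "\<not> (lo 1 < hi 3 \<and> lo 3 < hi 1)" "\<not> (lo 2 < hi 3 \<and> lo 3 < hi 2)"
    "\<not> (lo 0 < hi 4 \<and> lo 4 < hi 0)" "\<not> (lo 2 < hi 4 \<and> lo 4 < hi 2)"
    "\<not> (lo 0 < hi 5 \<and> lo 5 < hi 0)" "\<not> (lo 1 < hi 5 \<and> lo 5 < hi 1)"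
    using pos meet by (simp_all add: M3_E_def doubleton_eq_iff)
  \<comment> \<open>one interval of the triangle lies in the union of the other two,
    so its pendant meets one of them\<close>
  then show False
    by (auto simp: not_less)
qed

lemma cycle_not_interval_rep:
  assumes "r \<ge> 4"
  shows "\<not> interval_rep (cycle_V r) (cycle_E r) lo hi"
proof
  assume "interval_rep (cycle_V r) (cycle_E r) lo hi"
  then have meet: "cycle_E r u v \<longleftrightarrow> lo u < hi v \<and> lo v < hi u" if "u < r" "v < r" "u \<noteq> v" for u v
    using that unfolding interval_rep_def cycle_V_def by auto
  \<comment> \<open>the interval ending first meets both of its cycle neighbours, which then meet each other\<close>
  have "Min (hi ` {..<r}) \<in> hi ` {..<r}"
    using assms by (intro Min_in) (auto simp: lessThan_empty_iff)
  then obtain t where t: "t < r" "hi t = Min (hi ` {..<r})"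
    by auto
  define u where "u = (t + 1) mod r"
  define w where "w = (t + r - 1) mod r"
  have uw: "u < r" "w < r" "u \<noteq> t" "w \<noteq> t" "u \<noteq> w"
    using t(1) assms unfolding u_def w_def by (auto simp: mod_if)
  have "cycle_E r t u" "cycle_E r t w" "\<not> cycle_E r u w"
    using t(1) assms unfolding u_def w_def cycle_E_def by (auto simp: mod_if)
  with meet uw t(1) have "lo u < hi t" "lo w < hi t" "\<not> (lo u < hi w \<and> lo w < hi u)"
    by auto
  moreover have "hi t \<le> hi u" "hi t \<le> hi w"
    using t uw by simp_all
  ultimately show False
    by auto
qed

lemma cycle_reachable: "v \<in> cycle_V r \<Longrightarrow> reachable (cycle_V r) (cycle_E r) 0 v"
proof (induction v)
  case (Suc v)
  then have "v < r" "Suc v < r"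
    by (simp_all add: cycle_V_def)
  then have edge: "cycle_E r v (Suc v)"
    by (simp add: cycle_E_def)
  have "reachable (cycle_V r) (cycle_E r) 0 v"
    using Suc.IH \<open>v < r\<close> by (simp add: cycle_V_def)
  from reachable_edge[OF this edge] show ?case
    using \<open>v < r\<close> \<open>Suc v < r\<close> by (simp add: cycle_V_def)
qed simp

lemma M2_reachable: "v \<in> M2_V \<Longrightarrow> reachable M2_V M2_E 0 v"
proof -
  have r0: "reachable M2_V M2_E 0 0"
    by simp
  have r1: "reachable M2_V M2_E 0 1"
    by (rule reachable_edge[OF r0]) (simp_all add: M2_V_def M2_E_def)
  have r2: "reachable M2_V M2_E 0 2"
    by (rule reachable_edge[OF r0]) (simp_all add: M2_V_def M2_E_def)
  have r3: "reachable M2_V M2_E 0 3"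
    by (rule reachable_edge[OF r0]) (simp_all add: M2_V_def M2_E_def)
  have r4: "reachable M2_V M2_E 0 4"
    by (rule reachable_edge[OF r1]) (simp_all add: M2_V_def M2_E_def)
  have r5: "reachable M2_V M2_E 0 5"
    by (rule reachable_edge[OF r2]) (simp_all add: M2_V_def M2_E_def)
  have r6: "reachable M2_V M2_E 0 6"
    by (rule reachable_edge[OF r3]) (simp_all add: M2_V_def M2_E_def)
  assume "v \<in> M2_V"
  then have "v \<in> {0, 1, 2, 3, 4, 5, 6}"
    by (auto simp: M2_V_def)
  then show ?thesis
    by (elim insertE emptyE) (simp_all only: r0 r1 r2 r3 r4 r5 r6)
qed

lemma M3_reachable: "v \<in> M3_V \<Longrightarrow> reachable M3_V M3_E 0 v"
proof -
  have r0: "reachable M3_V M3_E 0 0"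
    by simp
  have r1: "reachable M3_V M3_E 0 1"
    by (rule reachable_edge[OF r0]) (simp_all add: M3_V_def M3_E_def)
  have r2: "reachable M3_V M3_E 0 2"
    by (rule reachable_edge[OF r0]) (simp_all add: M3_V_def M3_E_def)
  have r3: "reachable M3_V M3_E 0 3"
    by (rule reachable_edge[OF r0]) (simp_all add: M3_V_def M3_E_def)
  have r4: "reachable M3_V M3_E 0 4"
    by (rule reachable_edge[OF r1]) (simp_all add: M3_V_def M3_E_def)
  have r5: "reachable M3_V M3_E 0 5"
    by (rule reachable_edge[OF r2]) (simp_all add: M3_V_def M3_E_def)
  assume "v \<in> M3_V"
  then have "v \<in> {0, 1, 2, 3, 4, 5}"
    by (auto simp: M3_V_def)
  then show ?thesis
    by (elim insertE emptyE) (simp_all only: r0 r1 r2 r3 r4 r5)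
qed

lemma B0_EPG_no_induced_non_interval:
  assumes "B0_EPG V E" "w \<in> VH" "\<And>v. v \<in> VH \<Longrightarrow> reachable VH EH w v"
    "\<And>lo hi. \<not> interval_rep VH EH lo hi"
  shows "\<not> induced_subgraph VH EH V E"
proof
  assume "induced_subgraph VH EH V E"
  with assms(1) have "B0_EPG VH EH"
    by (rule B0_EPG_induced_subgraph)
  from B0_EPG_connected_imp_interval_rep[OF this assms(2,3)] assms(4) show False
    by blast
qed

lemma B0_EPG_obstruction_free:
  assumes "B0_EPG V E"
  shows "\<not> induced_subgraph M2_V M2_E V E \<and> \<not> induced_subgraph M3_V M3_E V E \<and>
     (\<forall>r\<ge>4. \<not> induced_subgraph (cycle_V r) (cycle_E r) V E)"
proof (intro conjI allI impI)
  show "\<not> induced_subgraph M2_V M2_E V E"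
    using B0_EPG_no_induced_non_interval[OF assms _ M2_reachable M2_not_interval_rep]
    by (simp add: M2_V_def)
  show "\<not> induced_subgraph M3_V M3_E V E"
    using B0_EPG_no_induced_non_interval[OF assms _ M3_reachable M3_not_interval_rep]
    by (simp add: M3_V_def)
  fix r :: nat
  assume "r \<ge> 4"
  then show "\<not> induced_subgraph (cycle_V r) (cycle_E r) V E"
    using B0_EPG_no_induced_non_interval[OF assms _ cycle_reachable cycle_not_interval_rep]
    by (simp add: cycle_V_def)
qed

section \<open>Induced paths and triangles\<close>

lemma simple_graph_sym: "simple_graph V E \<Longrightarrow> E u v \<Longrightarrow> E v u"
  and simple_graph_irrefl: "simple_graph V E \<Longrightarrow> \<not> E u u"
  and simple_graph_finite: "simple_graph V E \<Longrightarrow> finite V"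
  unfolding simple_graph_def by blast+

definition induced_path :: "'a set \<Rightarrow> ('a \<Rightarrow> 'a \<Rightarrow> bool) \<Rightarrow> 'a list \<Rightarrow> bool" where
  "induced_path V E xs \<longleftrightarrow> distinct xs \<and> set xs \<subseteq> V \<and>
     (\<forall>i<length xs. \<forall>j<length xs. E (xs ! i) (xs ! j) \<longleftrightarrow> i = Suc j \<or> j = Suc i)"

lemma induced_path_nth_adj:
  "induced_path V E xs \<Longrightarrow> i < length xs \<Longrightarrow> j < length xs \<Longrightarrow>
    E (xs ! i) (xs ! j) \<longleftrightarrow> i = Suc j \<or> j = Suc i"
  unfolding induced_path_def by blast

lemma induced_path_take: "induced_path V E xs \<Longrightarrow> induced_path V E (take n xs)"
  unfolding induced_path_def by (auto dest: in_set_takeD)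

lemma induced_path_drop: "induced_path V E xs \<Longrightarrow> induced_path V E (drop n xs)"
  unfolding induced_path_def by (auto dest: in_set_dropD)

lemma induced_path_rev:
  assumes "induced_path V E xs"
  shows "induced_path V E (rev xs)"
  unfolding induced_path_def
proof (intro conjI allI impI)
  show "distinct (rev xs)" "set (rev xs) \<subseteq> V"
    using assms unfolding induced_path_def by auto
  fix i j assume ij: "i < length (rev xs)" "j < length (rev xs)"
  then have "E (rev xs ! i) (rev xs ! j) \<longleftrightarrow> E (xs ! (length xs - Suc i)) (xs ! (length xs - Suc j))"
    by (simp add: rev_nth)
  also have "\<dots> \<longleftrightarrow>
      length xs - Suc i = Suc (length xs - Suc j) \<or> length xs - Suc j = Suc (length xs - Suc i)"
    using assms ij unfolding induced_path_def by auto
  also have "\<dots> \<longleftrightarrow> i = Suc j \<or> j = Suc i"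
    using ij by auto
  finally show "E (rev xs ! i) (rev xs ! j) \<longleftrightarrow> i = Suc j \<or> j = Suc i" .
qed

lemma induced_path_Cons:
  assumes "simple_graph V E" "induced_path V E xs" "y \<in> V" "y \<notin> set xs"
    "\<And>t. t < length xs \<Longrightarrow> E y (xs ! t) \<longleftrightarrow> t = 0"
  shows "induced_path V E (y # xs)"
  unfolding induced_path_def
proof (intro conjI allI impI)
  show "distinct (y # xs)" "set (y # xs) \<subseteq> V"
    using assms(2-4) unfolding induced_path_def by auto
  fix i j assume ij: "i < length (y # xs)" "j < length (y # xs)"
  have "E u v \<longleftrightarrow> E v u" for u v
    using simple_graph_sym[OF assms(1)] by blast
  with assms(2,5) ij simple_graph_irrefl[OF assms(1)]
  show "E ((y # xs) ! i) ((y # xs) ! j) \<longleftrightarrow> i = Suc j \<or> j = Suc i"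
    unfolding induced_path_def by (cases i; cases j) auto
qed

lemma induced_path_closes_cycle:
  assumes "simple_graph V E" "induced_path V E xs" "length xs \<ge> 3" "y \<in> V" "y \<notin> set xs"
    "\<And>t. t < length xs \<Longrightarrow> E y (xs ! t) \<longleftrightarrow> t = 0 \<or> t = length xs - 1"
  shows "induced_subgraph (cycle_V (Suc (length xs))) (cycle_E (Suc (length xs))) V E"
  unfolding induced_subgraph_def
proof (intro exI[of _ "\<lambda>i. (y # xs) ! i"] conjI ballI)
  have "distinct (y # xs)" "set (y # xs) \<subseteq> V"
    using assms(2,4,5) unfolding induced_path_def by auto
  then show "inj_on (\<lambda>i. (y # xs) ! i) (cycle_V (Suc (length xs)))"
      "(\<lambda>i. (y # xs) ! i) ` cycle_V (Suc (length xs)) \<subseteq> V"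
    unfolding cycle_V_def inj_on_def
    by (auto simp: nth_eq_iff_index_eq simp del: nth_Cons) (auto simp: nth_Cons split: nat.split)
  have sym: "E u v \<longleftrightarrow> E v u" for u v
    using simple_graph_sym[OF assms(1)] by blast
  fix u v assume "u \<in> cycle_V (Suc (length xs))" "v \<in> cycle_V (Suc (length xs))"
  then have "u < Suc (length xs)" "v < Suc (length xs)"
    unfolding cycle_V_def by auto
  with assms(2,3,6) sym simple_graph_irrefl[OF assms(1)]
  show "cycle_E (Suc (length xs)) u v \<longleftrightarrow> E ((y # xs) ! u) ((y # xs) ! v)"
    unfolding induced_path_def cycle_E_def by (cases u; cases v) (auto simp: mod_Suc)
qed

lemma induced_M2_from_path:
  assumes G: "simple_graph V E" and path: "induced_path V E [e, b, a, c, f]" and "d \<in> V" "g \<in> V"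
    and "E a d" "E d g" "\<not> E d e" "\<not> E d b" "\<not> E d c" "\<not> E d f"
    "\<not> E g e" "\<not> E g b" "\<not> E g a" "\<not> E g c" "\<not> E g f"
  shows "induced_subgraph M2_V M2_E V E"
  unfolding induced_subgraph_def
proof (intro exI[of _ "\<lambda>i. [a, b, c, d, e, f, g] ! i"] conjI)
  have sym: "E u v \<Longrightarrow> E v u" and irr: "\<not> E u u" for u v
    using simple_graph_sym[OF G] simple_graph_irrefl[OF G] by blast+
  from path have "distinct [e, b, a, c, f]" "{e, b, a, c, f} \<subseteq> V"
      "\<forall>i<5. \<forall>j<5. E ([e, b, a, c, f] ! i) ([e, b, a, c, f] ! j) \<longleftrightarrow> i = Suc j \<or> j = Suc i"
    unfolding induced_path_def by simp_all
  then have path_facts: "distinct [e, b, a, c, f]" "{e, b, a, c, f} \<subseteq> V"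
      "E e b" "E b a" "E a c" "E c f" "\<not> E e a" "\<not> E e c" "\<not> E e f" "\<not> E b c" "\<not> E b f" "\<not> E a f"
    by (simp_all add: All_less_Suc2 numeral_eq_Suc)
  have VV: "M2_V = {0, 1, 2, 3, 4, 5, 6}"
    by (auto simp: M2_V_def)
  have dist: "distinct [a, b, c, d, e, f, g]"
    using path_facts assms(5-) sym irr by auto
  then show "inj_on (\<lambda>i. [a, b, c, d, e, f, g] ! i) M2_V"
    unfolding VV by (auto simp: inj_on_def)
  show "(\<lambda>i. [a, b, c, d, e, f, g] ! i) ` M2_V \<subseteq> V"
    using path_facts assms(3,4) unfolding VV by simp
  have no_sym: "\<not> E y x" if "\<not> E x y" for x y
    using that sym by blast
  show "\<forall>u\<in>M2_V. \<forall>v\<in>M2_V. M2_E u v \<longleftrightarrow> E ([a, b, c, d, e, f, g] ! u) ([a, b, c, d, e, f, g] ! v)"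
    unfolding VV using path_facts(3-) assms(5-) path_facts(7-)[THEN no_sym] assms(7-)[THEN no_sym]
      path_facts(3-6)[THEN sym] assms(5,6)[THEN sym] irr
    by (simp add: M2_E_def doubleton_eq_iff numeral_eq_Suc)
qed

lemma induced_M3_from_path:
  assumes G: "simple_graph V E" and path: "induced_path V E [d, a, b, e]" and "c \<in> V" "f \<in> V"
    and "E a c" "E b c" "E c f" "\<not> E c d" "\<not> E c e"
    "\<not> E f d" "\<not> E f a" "\<not> E f b" "\<not> E f e"
  shows "induced_subgraph M3_V M3_E V E"
  unfolding induced_subgraph_def
proof (intro exI[of _ "\<lambda>i. [a, b, c, d, e, f] ! i"] conjI)
  have sym: "E u v \<Longrightarrow> E v u" and irr: "\<not> E u u" for u v
    using simple_graph_sym[OF G] simple_graph_irrefl[OF G] by blast+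
  from path have "distinct [d, a, b, e]" "{d, a, b, e} \<subseteq> V"
      "\<forall>i<4. \<forall>j<4. E ([d, a, b, e] ! i) ([d, a, b, e] ! j) \<longleftrightarrow> i = Suc j \<or> j = Suc i"
    unfolding induced_path_def by simp_all
  then have path_facts: "distinct [d, a, b, e]" "{d, a, b, e} \<subseteq> V"
      "E d a" "E a b" "E b e" "\<not> E d b" "\<not> E d e" "\<not> E a e"
    by (simp_all add: All_less_Suc2 numeral_eq_Suc)
  have VV: "M3_V = {0, 1, 2, 3, 4, 5}"
    by (auto simp: M3_V_def)
  have dist: "distinct [a, b, c, d, e, f]"
    using path_facts assms(5-) sym irr by auto
  then show "inj_on (\<lambda>i. [a, b, c, d, e, f] ! i) M3_V"
    unfolding VV by (auto simp: inj_on_def)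
  show "(\<lambda>i. [a, b, c, d, e, f] ! i) ` M3_V \<subseteq> V"
    using path_facts assms(3,4) unfolding VV by simp
  have no_sym: "\<not> E y x" if "\<not> E x y" for x y
    using that sym by blast
  show "\<forall>u\<in>M3_V. \<forall>v\<in>M3_V. M3_E u v \<longleftrightarrow> E ([a, b, c, d, e, f] ! u) ([a, b, c, d, e, f] ! v)"
    unfolding VV using path_facts(3-) assms(5-) path_facts(6-)[THEN no_sym] assms(8-)[THEN no_sym]
      path_facts(3-5)[THEN sym] assms(5-7)[THEN sym] irr
    by (simp add: M3_E_def doubleton_eq_iff numeral_eq_Suc)
qed

lemma induced_path_Cons_pendant:
  assumes "simple_graph V E" "induced_path V E xs" "y \<in> V" "z \<in> V" "y \<notin> set xs" "z \<notin> set xs" "E z y"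
    "\<And>t. t < length xs \<Longrightarrow> E y (xs ! t) \<longleftrightarrow> t = 0" "\<And>t. t < length xs \<Longrightarrow> \<not> E z (xs ! t)"
  shows "induced_path V E (z # y # xs)"
proof (rule induced_path_Cons[OF assms(1) induced_path_Cons[OF assms(1,2,3,5,8)] assms(4)])
  show "z \<notin> set (y # xs)"
    using assms(6,7) simple_graph_irrefl[OF assms(1)] by auto
  show "E z ((y # xs) ! t) \<longleftrightarrow> t = 0" if "t < length (y # xs)" for t
    using that assms(7,9) by (cases t) auto
qed

lemma ex_longest_induced_path:
  assumes "simple_graph V E" "v \<in> V"
  obtains ps where "induced_path V E ps" "ps \<noteq> []"
    "\<And>qs. induced_path V E qs \<Longrightarrow> length qs \<le> length ps"
proof -
  have "induced_path V E [v]"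
    using assms simple_graph_irrefl[OF assms(1)] unfolding induced_path_def by auto
  moreover have "length qs < Suc (card V)" if "induced_path V E qs" for qs
  proof -
    have "distinct qs" "set qs \<subseteq> V"
      using that unfolding induced_path_def by auto
    with simple_graph_finite[OF assms(1)] show ?thesis
      by (metis card_mono distinct_card less_Suc_eq_le)
  qed
  ultimately obtain ps
    where "induced_path V E ps" "\<And>qs. induced_path V E qs \<Longrightarrow> length qs \<le> length ps"
    using ex_has_greatest_nat[of "induced_path V E" "[v]" length "Suc (card V)"] by blast
  moreover from this \<open>induced_path V E [v]\<close> have "ps \<noteq> []"
    by fastforce
  ultimately show ?thesis
    using that by blast
qed

definition triangle :: "'a set \<Rightarrow> ('a \<Rightarrow> 'a \<Rightarrow> bool) \<Rightarrow> 'a \<Rightarrow> 'a \<Rightarrow> 'a \<Rightarrow> bool" where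
  "triangle V E a b c \<longleftrightarrow> a \<in> V \<and> b \<in> V \<and> c \<in> V \<and> E a b \<and> E b c \<and> E c a"

lemma triangle_simple_cycle:
  assumes "simple_graph V E" "triangle V E a b c"
  shows "simple_cycle V E [a, b, c]" "cycle_edges [a, b, c] = {{a, b}, {b, c}, {c, a}}"
proof -
  have "distinct [a, b, c]"
    using assms(2) simple_graph_irrefl[OF assms(1)] unfolding triangle_def by auto
  with assms(2) show "simple_cycle V E [a, b, c]"
    unfolding simple_cycle_def triangle_def by (auto simp: less_Suc_eq)
  have "{g i | i. i < Suc (Suc (Suc 0))} = {g 0, g 1, g 2}" for g :: "nat \<Rightarrow> 'a set"
  proof -
    have "{i. i < Suc (Suc (Suc 0))} = {0, 1, 2}"
      by auto
    moreover have "{g i | i. i < Suc (Suc (Suc 0))} = g ` {i. i < Suc (Suc (Suc 0))}"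
      by blast
    ultimately show ?thesis
      by simp
  qed
  from this[of "\<lambda>i. {[a, b, c] ! i, [a, b, c] ! ((i + 1) mod 3)}"]
  show "cycle_edges [a, b, c] = {{a, b}, {b, c}, {c, a}}"
    unfolding cycle_edges_def by (simp add: numeral_2_eq_2 insert_commute)
qed

lemma cactus_triangles_eq:
  assumes "simple_graph V E" "cactus V E" "triangle V E a b c" "triangle V E a' b' c'"
    "x \<noteq> y" "{x, y} \<subseteq> {a, b, c} \<inter> {a', b', c'}"
  shows "{a, b, c} = {a', b', c'}"
proof -
  note C = triangle_simple_cycle[OF assms(1,3)] and C' = triangle_simple_cycle[OF assms(1,4)]
  have "card {x, y} \<le> card ({a, b, c} \<inter> {a', b', c'})"
    using assms(6) by (intro card_mono) auto
  with assms(5) have "\<not> card (set [a, b, c] \<inter> set [a', b', c']) \<le> 1"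
    by simp
  with assms(2) C(1) C'(1) have "cycle_edges [a, b, c] = cycle_edges [a', b', c']"
    unfolding cactus_def by blast
  moreover have "\<Union>{{u, v}, {v, w}, {w, u}} = {u, v, w}" for u v w :: 'a
    by auto
  ultimately show ?thesis
    unfolding C(2) C'(2) by metis
qed

section \<open>A longest induced path in an obstruction-free cactus\<close>

locale obstruction_free_cactus =
  fixes V :: "'a set" and E :: "'a \<Rightarrow> 'a \<Rightarrow> bool"
  assumes simple: "simple_graph V E" and cactus: "cactus V E"
    and no_M2: "\<not> induced_subgraph M2_V M2_E V E"
    and no_M3: "\<not> induced_subgraph M3_V M3_E V E"
    and no_long_cycle: "\<And>r. r \<ge> 4 \<Longrightarrow> \<not> induced_subgraph (cycle_V r) (cycle_E r) V E"
begin

lemma sym: "E u v \<Longrightarrow> E v u"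
  using simple_graph_sym[OF simple] .

lemma irrefl: "\<not> E u u"
  using simple_graph_irrefl[OF simple] .

lemma triangles_eq:
  "triangle V E a b c \<Longrightarrow> triangle V E a' b' c' \<Longrightarrow> x \<noteq> y \<Longrightarrow> {x, y} \<subseteq> {a, b, c} \<inter> {a', b', c'} \<Longrightarrow>
    {a, b, c} = {a', b', c'}"
  using cactus_triangles_eq[OF simple cactus] .

end

locale longest_induced_path = obstruction_free_cactus +
  fixes ps :: "'a list"
  assumes induced: "induced_path V E ps" and nonempty: "ps \<noteq> []"
    and longest: "\<And>qs. induced_path V E qs \<Longrightarrow> length qs \<le> length ps"
begin

abbreviation "n \<equiv> length ps"

lemma path_adj: "i < n \<Longrightarrow> j < n \<Longrightarrow> E (ps ! i) (ps ! j) \<longleftrightarrow> i = Suc j \<or> j = Suc i"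
  using induced_path_nth_adj[OF induced] .

lemma path_nth_eq_iff: "i < n \<Longrightarrow> j < n \<Longrightarrow> ps ! i = ps ! j \<longleftrightarrow> i = j"
  using induced unfolding induced_path_def by (simp add: nth_eq_iff_index_eq)

lemma path_nth_in_V: "i < n \<Longrightarrow> ps ! i \<in> V"
  using induced nth_mem unfolding induced_path_def by blast

definition off_path :: "'a \<Rightarrow> bool" where
  "off_path x \<longleftrightarrow> x \<in> V \<and> x \<notin> set ps"

lemma off_path_neq_nth: "off_path x \<Longrightarrow> i < n \<Longrightarrow> ps ! i \<noteq> x"
  unfolding off_path_def using nth_mem by blast

lemma path_window:
  assumes "m + k \<le> n"
  shows "induced_path V E (map (\<lambda>t. ps ! (m + t)) [0..<k])"
proof -
  have "take k (drop m ps) = map (\<lambda>t. ps ! (m + t)) [0..<k]"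
    using assms by (simp add: list_eq_iff_nth_eq)
  then show ?thesis
    using induced_path_take[OF induced_path_drop[OF induced]] by metis
qed

lemma neighbour_between:
  assumes x: "off_path x" and ij: "i + 2 \<le> j" "j < n" and "E x (ps ! i)" "E x (ps ! j)"
  shows "\<exists>l. i < l \<and> l < j \<and> E x (ps ! l)"
proof (rule ccontr)
  assume between: "\<nexists>l. i < l \<and> l < j \<and> E x (ps ! l)"
  define qs where "qs = map (\<lambda>t. ps ! (i + t)) [0..<Suc j - i]"
  have "induced_subgraph (cycle_V (Suc (length qs))) (cycle_E (Suc (length qs))) V E"
  proof (rule induced_path_closes_cycle[OF simple])
    show "induced_path V E qs"
      unfolding qs_def using ij by (intro path_window) simp
    show "x \<in> V" "x \<notin> set qs"
      using x off_path_neq_nth[OF x] ij unfolding qs_def off_path_def by auto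
    show "E x (qs ! t) \<longleftrightarrow> t = 0 \<or> t = length qs - 1" if "t < length qs" for t
      using that between assms(4,5) ij unfolding qs_def by (cases "t = 0 \<or> t = j - i") auto
  qed (use ij in \<open>simp add: qs_def\<close>)
  moreover have "4 \<le> Suc (length qs)"
    using ij unfolding qs_def by simp
  ultimately show False
    using no_long_cycle by blast
qed

definition contact :: "'a \<Rightarrow> nat" where
  "contact x = (LEAST i. i < n \<and> E x (ps ! i))"

definition apex :: "'a \<Rightarrow> bool" where
  "apex x \<longleftrightarrow> Suc (contact x) < n \<and> E x (ps ! Suc (contact x))"

lemma contact_least:
  assumes "i < n" "E x (ps ! i)"
  shows "contact x < n" "E x (ps ! contact x)" "contact x \<le> i"
proof -
  show "contact x < n" "E x (ps ! contact x)"
    using LeastI[of "\<lambda>i. i < n \<and> E x (ps ! i)", OF conjI[OF assms]] unfolding contact_def by auto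
  show "contact x \<le> i"
    unfolding contact_def using assms by (simp add: Least_le)
qed

lemma no_three_consecutive_path_neighbours:
  assumes x: "off_path x" and i: "Suc (Suc i) < n"
    and "E x (ps ! i)" "E x (ps ! Suc i)" "E x (ps ! Suc (Suc i))"
  shows False
proof -
  have "triangle V E x (ps ! i) (ps ! Suc i)" "triangle V E x (ps ! Suc i) (ps ! Suc (Suc i))"
    using x i assms(3-5) path_adj path_nth_in_V sym unfolding triangle_def off_path_def by auto
  moreover have "x \<noteq> ps ! Suc i"
    using off_path_neq_nth[OF x, of "Suc i"] i by auto
  ultimately have "{x, ps ! i, ps ! Suc i} = {x, ps ! Suc i, ps ! Suc (Suc i)}"
    by (intro triangles_eq[of _ _ _ _ _ _ x "ps ! Suc i"]) auto
  then have "ps ! i \<in> {x, ps ! Suc i, ps ! Suc (Suc i)}"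
    by blast
  then show False
    using path_nth_eq_iff[of i "Suc i"] path_nth_eq_iff[of i "Suc (Suc i)"]
      off_path_neq_nth[OF x, of i] i
    by auto
qed

lemma path_neighbour_le_Suc_contact:
  assumes x: "off_path x" and a: "a < n" "E x (ps ! a)"
  shows "a \<le> Suc (contact x)"
proof (rule ccontr)
  define i where "i = contact x"
  note i = contact_least[OF a, folded i_def]
  assume "\<not> a \<le> Suc (contact x)"
  then have "Suc (Suc i) \<le> a"
    unfolding i_def by simp
  define j where "j = (LEAST j. Suc (Suc i) \<le> j \<and> j < n \<and> E x (ps ! j))"
  have j: "Suc (Suc i) \<le> j" "j < n" "E x (ps ! j)"
    using LeastI[of "\<lambda>j. Suc (Suc i) \<le> j \<and> j < n \<and> E x (ps ! j)" a] \<open>Suc (Suc i) \<le> a\<close> a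
    unfolding j_def by auto
  have j_min: "j \<le> l" if "Suc (Suc i) \<le> l" "l < n" "E x (ps ! l)" for l
    unfolding j_def using that by (simp add: Least_le)
  obtain l where l: "i < l" "l < j" "E x (ps ! l)"
    using neighbour_between[OF x _ j(2) i(2) j(3)] j(1) by auto
  have "\<not> Suc (Suc i) \<le> l"
    using j_min[of l] l j(2) by auto
  with l(1) have "l = Suc i"
    by linarith
  with l(3) have Suc_i: "E x (ps ! Suc i)"
    by simp
  show False
  proof (cases "j = Suc (Suc i)")
    case True
    then show False
      using no_three_consecutive_path_neighbours[OF x _ i(2) Suc_i] j by simp
  next
    case False
    then obtain l' where "Suc i < l'" "l' < j" "E x (ps ! l')"
      using neighbour_between[OF x _ j(2) Suc_i j(3)] j(1) by auto
    then show False
      using j_min[of l'] j(2) by simp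
  qed
qed

lemma path_neighbours:
  assumes x: "off_path x" and "\<exists>i<n. E x (ps ! i)" and a: "a < n"
  shows "E x (ps ! a) \<longleftrightarrow> a = contact x \<or> (a = Suc (contact x) \<and> apex x)"
proof
  assume "E x (ps ! a)"
  then have "contact x \<le> a" "a \<le> Suc (contact x)"
    using contact_least(3) path_neighbour_le_Suc_contact[OF x] a by auto
  with \<open>E x (ps ! a)\<close> a show "a = contact x \<or> (a = Suc (contact x) \<and> apex x)"
    unfolding apex_def using le_SucE le_antisym by blast
next
  from assms(2) obtain i where "i < n" "E x (ps ! i)"
    by blast
  then show "a = contact x \<or> (a = Suc (contact x) \<and> apex x) \<Longrightarrow> E x (ps ! a)"
    using contact_least(2) unfolding apex_def by blast
qed

lemma pendant_edge_far_from_start: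
  assumes y: "off_path y" and z: "off_path z" "E z y" "\<And>t. t < n \<Longrightarrow> \<not> E z (ps ! t)"
    and k: "k < n" "\<And>t. k \<le> t \<Longrightarrow> t < n \<Longrightarrow> E y (ps ! t) \<longleftrightarrow> t = k"
  shows "2 \<le> k"
proof -
  have "induced_path V E (z # y # drop k ps)"
    using y z k by (intro induced_path_Cons_pendant[OF simple induced_path_drop[OF induced]])
      (auto simp: off_path_def dest: in_set_dropD)
  then show ?thesis
    using longest k(1) by fastforce
qed

lemma pendant_edge_far_from_end:
  assumes y: "off_path y" and z: "off_path z" "E z y" "\<And>t. t < n \<Longrightarrow> \<not> E z (ps ! t)"
    and k: "k < n" "\<And>t. t \<le> k \<Longrightarrow> E y (ps ! t) \<longleftrightarrow> t = k"
  shows "k + 3 \<le> n"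
proof -
  have "induced_path V E (z # y # rev (take (Suc k) ps))"
    using y z k
    by (intro induced_path_Cons_pendant[OF simple induced_path_rev[OF induced_path_take[OF induced]]])
      (auto simp: off_path_def rev_nth dest: in_set_takeD)
  then show ?thesis
    using longest k(1) by fastforce
qed

text \<open>If z y could be prepended to the part of the path on either side of ps ! i, the path
  would not be longest; so ps ! i has two path vertices on each side, and these induce M2
  together with y and z.\<close>

lemma no_pendant_edge_at_path_vertex:
  assumes y: "off_path y" and z: "off_path z" "E z y" "\<And>t. t < n \<Longrightarrow> \<not> E z (ps ! t)"
    and i: "i < n" "\<And>t. t < n \<Longrightarrow> E y (ps ! t) \<longleftrightarrow> t = i"
  shows False
proof -
  have "2 \<le> i"
    using pendant_edge_far_from_start[OF y z i(1)] i(2) by simp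
  moreover have "i + 3 \<le> n"
    using pendant_edge_far_from_end[OF y z i(1)] i by simp
  moreover define m where "m = i - 2"
  ultimately have m: "i = m + 2" "m + 5 \<le> n"
    by simp_all
  then have window:
      "induced_path V E [ps ! m, ps ! (m + 1), ps ! (m + 2), ps ! (m + 3), ps ! (m + 4)]"
    using path_window[of m 5] by (simp add: numeral_eq_Suc)
  have "E (ps ! (m + 2)) y" "E y z"
    using sym i z(2) m(1) by blast+
  then have "induced_subgraph M2_V M2_E V E"
    using y z m i(2)
    by (intro induced_M2_from_path[OF simple window, where d = y and g = z])
      (simp_all add: off_path_def)
  with no_M2 show False ..
qed

lemma no_pendant_edge_at_path_edge:
  assumes y: "off_path y" and z: "off_path z" "E z y" "\<And>t. t < n \<Longrightarrow> \<not> E z (ps ! t)"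
    and i: "Suc i < n" "\<And>t. t < n \<Longrightarrow> E y (ps ! t) \<longleftrightarrow> t = i \<or> t = Suc i"
  shows False
proof -
  have "2 \<le> Suc i"
    using pendant_edge_far_from_start[OF y z i(1)] i(2) by simp
  moreover have "i + 3 \<le> n"
    using pendant_edge_far_from_end[OF y z, of i] i by simp
  moreover define m where "m = i - 1"
  ultimately have m: "i = m + 1" "m + 4 \<le> n"
    by simp_all
  then have window: "induced_path V E [ps ! m, ps ! (m + 1), ps ! (m + 2), ps ! (m + 3)]"
    using path_window[of m 4] by (simp add: numeral_eq_Suc)
  have "E (ps ! (m + 1)) y" "E (ps ! (m + 2)) y" "E y z"
    using sym i z(2) m(1) by auto
  then have "induced_subgraph M3_V M3_E V E"
    using y z m i(2)
    by (intro induced_M3_from_path[OF simple window, where c = y and f = z])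
      (simp_all add: off_path_def)
  with no_M3 show False ..
qed

lemma off_path_attached:
  assumes x: "off_path x"
  shows "\<exists>i<n. E x (ps ! i)"
proof (rule ccontr)
  assume "\<not> (\<exists>i<n. E x (ps ! i))"
  define S where "S = set ps \<union> {v \<in> V. \<exists>i<n. E v (ps ! i)}"
  have "ps ! 0 \<in> V"
    using path_nth_in_V nonempty by simp
  with x cactus have "reachable V E (ps ! 0) x"
    unfolding cactus_def graph_connected_def off_path_def by blast
  moreover have "ps ! 0 \<in> S" "x \<notin> S"
    using nonempty x \<open>\<not> (\<exists>i<n. E x (ps ! i))\<close> unfolding S_def off_path_def by auto
  ultimately obtain u v where uv: "E u v" "u \<in> V" "v \<in> V" "u \<in> S" "v \<notin> S"
    using rtranclp_exits_set[of _ "ps ! 0" x S] by blast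
  then have v: "off_path v" "\<And>t. t < n \<Longrightarrow> \<not> E v (ps ! t)"
    unfolding S_def off_path_def by auto
  have "u \<notin> set ps"
  proof
    assume "u \<in> set ps"
    then obtain k where "k < n" "ps ! k = u"
      by (auto simp: in_set_conv_nth)
    with v(2) sym uv(1) show False
      by blast
  qed
  with uv have u: "off_path u" "\<exists>i<n. E u (ps ! i)"
    unfolding S_def off_path_def by auto
  note nb = path_neighbours[OF u]
  show False
  proof (cases "apex u")
    case True
    then show False
      using no_pendant_edge_at_path_edge[OF u(1) v(1) sym[OF uv(1)] v(2), of "contact u"] nb
      unfolding apex_def by auto
  next
    case False
    then show False
      using no_pendant_edge_at_path_vertex[OF u(1) v(1) sym[OF uv(1)] v(2), of "contact u"] nb
        contact_least(1) u(2) by auto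
  qed
qed

lemma off_path_neighbours:
  "off_path x \<Longrightarrow> a < n \<Longrightarrow> E x (ps ! a) \<longleftrightarrow> a = contact x \<or> (a = Suc (contact x) \<and> apex x)"
  using path_neighbours off_path_attached by blast

lemma off_path_contact: "off_path x \<Longrightarrow> contact x < n"
  using off_path_attached contact_least(1) by blast

lemma common_neighbour_not_apex:
  assumes x: "off_path x" and y: "off_path y" and "E x y"
    and a: "a < n" "E x (ps ! a)" "E y (ps ! a)"
  shows "\<not> apex x"
proof
  assume "apex x"
  define i where "i = contact x"
  have i: "Suc i < n" "a = i \<or> a = Suc i"
    using \<open>apex x\<close> off_path_neighbours[OF x a(1)] a(2) unfolding apex_def i_def by auto
  \<comment> \<open>the other end of the path edge spanned by x\<close>
  define q where "q = (if a = i then Suc i else i)"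
  have q: "q < n" "E x (ps ! q)" "E (ps ! a) (ps ! q)"
    using i off_path_neighbours[OF x] \<open>apex x\<close> path_adj[of a q] unfolding q_def i_def by auto
  have "triangle V E x y (ps ! a)" "triangle V E x (ps ! a) (ps ! q)"
    using x y a q \<open>E x y\<close> path_nth_in_V sym[OF a(2)] sym[OF q(2)]
    unfolding triangle_def off_path_def by auto
  moreover have "x \<noteq> ps ! a"
    using off_path_neq_nth[OF x a(1)] by simp
  ultimately have "{x, y, ps ! a} = {x, ps ! a, ps ! q}"
    by (intro triangles_eq[of _ _ _ _ _ _ x "ps ! a"]) auto
  then have "y \<in> {x, ps ! a, ps ! q}"
    by blast
  then show False
    using \<open>E x y\<close> irrefl off_path_neq_nth[OF y] a(1) q(1) by auto
qed

lemma no_cycle_through_off_path_edge: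
  assumes x: "off_path x" and y: "off_path y" and "E x y" and "a < j" "j < n"
    and x_nb: "\<And>t. a \<le> t \<Longrightarrow> t \<le> j \<Longrightarrow> E x (ps ! t) \<longleftrightarrow> t = a"
    and y_nb: "\<And>t. a \<le> t \<Longrightarrow> t \<le> j \<Longrightarrow> E y (ps ! t) \<longleftrightarrow> t = j"
  shows False
proof -
  define sq where "sq = map (\<lambda>t. ps ! (a + t)) [0..<Suc j - a]"
  have "induced_path V E sq"
    unfolding sq_def using assms(4,5) by (intro path_window) simp
  then have "induced_path V E (x # sq)"
  proof (rule induced_path_Cons[OF simple])
    show "x \<in> V" "x \<notin> set sq"
      using x off_path_neq_nth[OF x] assms(4,5) unfolding sq_def off_path_def by auto
    show "E x (sq ! t) \<longleftrightarrow> t = 0" if "t < length sq" for t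
      using that x_nb[of "a + t"] unfolding sq_def by auto
  qed
  then have
    "induced_subgraph (cycle_V (Suc (length (x # sq)))) (cycle_E (Suc (length (x # sq)))) V E"
  proof (rule induced_path_closes_cycle[OF simple])
    show "y \<in> V" "y \<notin> set (x # sq)"
      using y off_path_neq_nth[OF y] \<open>E x y\<close> irrefl assms(4,5) unfolding sq_def off_path_def by auto
    show "E y ((x # sq) ! t) \<longleftrightarrow> t = 0 \<or> t = length (x # sq) - 1" if "t < length (x # sq)" for t
      using that sym[OF \<open>E x y\<close>] y_nb[of "a + (t - 1)"] assms(4) unfolding sq_def
      by (cases t) auto
  qed (use assms(4) in \<open>simp add: sq_def\<close>)
  moreover have "4 \<le> Suc (length (x # sq))"
    using assms(4) unfolding sq_def by simp
  ultimately show False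
    using no_long_cycle by blast
qed

lemma adjacent_off_path_ordered_contacts:
  assumes x: "off_path x" and y: "off_path y" and "E x y"
    and no_common: "\<And>a. a < n \<Longrightarrow> E x (ps ! a) \<Longrightarrow> \<not> E y (ps ! a)"
    and lt: "contact x < contact y"
  shows False
proof -
  define a where "a = (if apex x then Suc (contact x) else contact x)"
  define j where "j = contact y"
  have "a < n"
    using off_path_contact[OF x] unfolding a_def apex_def by auto
  then have a: "E x (ps ! a)" "\<And>t. t < n \<Longrightarrow> E x (ps ! t) \<Longrightarrow> t \<le> a"
    using off_path_neighbours[OF x] unfolding a_def by auto
  have j: "j < n" "E y (ps ! j)" "\<And>t. t < n \<Longrightarrow> E y (ps ! t) \<Longrightarrow> j \<le> t"
    using off_path_neighbours[OF y] off_path_contact[OF y] unfolding j_def by auto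
  have "a \<le> j"
    using lt unfolding a_def j_def by auto
  moreover have "a \<noteq> j"
    using no_common[OF \<open>a < n\<close> a(1)] j(2) by auto
  ultimately have "a < j"
    by simp
  show False
  proof (rule no_cycle_through_off_path_edge[OF x y \<open>E x y\<close> \<open>a < j\<close> j(1)])
    show "E x (ps ! t) \<longleftrightarrow> t = a" if "a \<le> t" "t \<le> j" for t
      using that a(1) a(2)[of t] j(1) by auto
    show "E y (ps ! t) \<longleftrightarrow> t = j" if "a \<le> t" "t \<le> j" for t
      using that j(2) j(3)[of t] j(1) by auto
  qed
qed

lemma adjacent_off_path:
  assumes x: "off_path x" and y: "off_path y" and "E x y"
  shows "\<not> apex x \<and> \<not> apex y \<and> contact x = contact y"
proof (cases "\<exists>a<n. E x (ps ! a) \<and> E y (ps ! a)")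
  case True
  then obtain a where a: "a < n" "E x (ps ! a)" "E y (ps ! a)"
    by blast
  have "\<not> apex x" "\<not> apex y"
    using common_neighbour_not_apex[OF x y \<open>E x y\<close> a]
      common_neighbour_not_apex[OF y x sym[OF \<open>E x y\<close>] a(1,3,2)]
    by auto
  with a show ?thesis
    using off_path_neighbours[OF x a(1)] off_path_neighbours[OF y a(1)] by simp
next
  case False
  then have "contact x \<noteq> contact y"
    using off_path_neighbours[OF x] off_path_neighbours[OF y] off_path_contact[OF x] by auto
  then consider "contact x < contact y" | "contact y < contact x"
    by linarith
  then show ?thesis
    using adjacent_off_path_ordered_contacts[OF x y \<open>E x y\<close>]
      adjacent_off_path_ordered_contacts[OF y x sym[OF \<open>E x y\<close>]] False
    by cases blast+
qed

lemma apex_unique: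
  assumes x: "off_path x" and y: "off_path y" and "apex x" "apex y" "contact x = contact y"
  shows "x = y"
proof -
  define i where "i = contact x"
  have i: "Suc i < n"
    using \<open>apex x\<close> unfolding apex_def i_def by simp
  have "E x (ps ! i)" "E y (ps ! i)"
    using off_path_neighbours[OF x] off_path_neighbours[OF y] i assms(5) unfolding i_def by auto
  moreover have "E (ps ! Suc i) x" "E (ps ! Suc i) y"
    using assms(3-5) sym unfolding apex_def i_def by simp_all
  ultimately have "triangle V E x (ps ! i) (ps ! Suc i)" "triangle V E y (ps ! i) (ps ! Suc i)"
    using x y i path_adj[of i "Suc i"] path_nth_in_V unfolding triangle_def off_path_def by auto
  moreover have "ps ! i \<noteq> ps ! Suc i"
    using path_nth_eq_iff[of i "Suc i"] i by simp
  ultimately have "{x, ps ! i, ps ! Suc i} = {y, ps ! i, ps ! Suc i}"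
    by (intro triangles_eq[of _ _ _ _ _ _ "ps ! i" "ps ! Suc i"]) auto
  then have "x \<in> {y, ps ! i, ps ! Suc i}"
    by blast
  then show "x = y"
    using off_path_neq_nth[OF x, of i] off_path_neq_nth[OF x, of "Suc i"] i by auto
qed

lemma off_path_neighbour_unique:
  assumes w: "off_path w" and x: "off_path x" and y: "off_path y" and "E w x" "E w y"
  shows "x = y"
proof (rule ccontr)
  assume "x \<noteq> y"
  define i where "i = contact w"
  have i: "i < n"
    using off_path_contact[OF w] unfolding i_def .
  have "\<not> apex w" "\<not> apex x" "\<not> apex y" "contact x = i" "contact y = i"
    using adjacent_off_path[OF w x \<open>E w x\<close>] adjacent_off_path[OF w y \<open>E w y\<close>]
    unfolding i_def by auto
  then have "E (ps ! i) w" "E x (ps ! i)" "E y (ps ! i)"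
    using off_path_neighbours[OF w i] off_path_neighbours[OF x i] off_path_neighbours[OF y i]
      sym[of w "ps ! i"] unfolding i_def by auto
  then have "triangle V E w x (ps ! i)" "triangle V E w y (ps ! i)"
    using w x y path_nth_in_V[OF i] assms(4,5) unfolding triangle_def off_path_def by auto
  moreover have "w \<noteq> ps ! i"
    using off_path_neq_nth[OF w i] by simp
  ultimately have "{w, x, ps ! i} = {w, y, ps ! i}"
    by (intro triangles_eq[of _ _ _ _ _ _ w "ps ! i"]) auto
  then have "x \<in> {w, y, ps ! i}"
    by blast
  then show False
    using \<open>x \<noteq> y\<close> \<open>E w x\<close> irrefl[of w] off_path_neq_nth[OF x i] by auto
qed

end

section \<open>An interval layout along the path\<close>

lemma scaled_blocks_meet:
  fixes W a b c d :: int and k l :: nat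
  assumes "W \<ge> 2" "0 \<le> a" "a < b" "b \<le> W + 1" "0 \<le> c" "c < d" "d \<le> W + 1" "k \<le> l"
  shows "int k * W + a < int l * W + d \<and> int l * W + c < int k * W + b \<longleftrightarrow>
    (l = k \<and> a < d \<and> c < b) \<or> (l = Suc k \<and> c + W < b)"
proof -
  obtain m where l: "l = k + m"
    using assms(8) le_Suc_ex by blast
  then have scale: "int l * W = int k * W + int m * W"
    by (simp add: distrib_right)
  consider "m = 0" | "m = 1" | "m \<ge> 2"
    by linarith
  then show ?thesis
  proof cases
    case 3
    then have "2 * W \<le> int m * W"
      using assms(1) by (intro mult_right_mono) auto
    with scale assms(1,4,5) have "\<not> int l * W + c < int k * W + b"
      by linarith
    moreover have "l \<noteq> k" "l \<noteq> Suc k"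
      using l 3 by auto
    ultimately show ?thesis
      by blast
  qed (use assms l scale in auto)
qed

locale path_layout = longest_induced_path +
  fixes label :: "'a \<Rightarrow> nat" and N :: nat
  assumes label_inj: "inj_on label V" and label_less: "\<And>v. v \<in> V \<Longrightarrow> label v < N"
begin

definition width :: int where
  "width = int N + 2"

definition path_index :: "'a \<Rightarrow> nat" where
  "path_index v = (LEAST k. k < n \<and> ps ! k = v)"

text \<open>An off-path vertex has at most one off-path neighbour, and the two then share the slot
  given by the smaller of their labels.\<close>

definition group :: "'a \<Rightarrow> 'a set" where
  "group v = insert v {w. off_path w \<and> E v w}"

definition slot :: "'a \<Rightarrow> nat" where
  "slot v = Min (label ` group v)"

definition block :: "'a \<Rightarrow> nat" where
  "block v = (if v \<in> set ps then path_index v else if apex v then Suc (contact v) else contact v)"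

definition offset_lo :: "'a \<Rightarrow> int" where
  "offset_lo v = (if v \<in> set ps \<or> apex v then 0 else 1 + int (slot v))"

definition offset_hi :: "'a \<Rightarrow> int" where
  "offset_hi v = (if v \<in> set ps then width + 1 else offset_lo v + 1)"

definition lo :: "'a \<Rightarrow> int" where
  "lo v = int (block v) * width + offset_lo v"

definition hi :: "'a \<Rightarrow> int" where
  "hi v = int (block v) * width + offset_hi v"

lemma path_index_nth: "k < n \<Longrightarrow> path_index (ps ! k) = k"
  unfolding path_index_def using path_nth_eq_iff by (intro Least_equality) auto

lemma group_subset: "v \<in> V \<Longrightarrow> group v \<subseteq> V"
  unfolding group_def off_path_def by auto

lemma slot_in_group:
  assumes "v \<in> V"
  shows "slot v \<in> label ` group v"
proof -
  have "finite (group v)"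
    using group_subset[OF assms] simple_graph_finite[OF simple] by (rule finite_subset)
  then show ?thesis
    unfolding slot_def by (intro Min_in) (auto simp: group_def)
qed

lemma slot_less:
  assumes "v \<in> V"
  shows "slot v < N"
proof -
  obtain w where "w \<in> group v" "slot v = label w"
    using slot_in_group[OF assms] by blast
  then show ?thesis
    using group_subset[OF assms] label_less by auto
qed

lemma group_adjacent:
  assumes "off_path x" "off_path y" "E x y"
  shows "group x = {x, y}"
proof
  show "group x \<subseteq> {x, y}"
    unfolding group_def using off_path_neighbour_unique[OF assms(1) _ assms(2) _ assms(3)] by blast
  show "{x, y} \<subseteq> group x"
    unfolding group_def using assms by blast
qed

lemma slot_eq_iff:
  assumes x: "off_path x" and y: "off_path y" and "x \<noteq> y"
  shows "slot x = slot y \<longleftrightarrow> E x y"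
proof
  assume "E x y"
  then have "group x = group y"
    using group_adjacent[OF x y \<open>E x y\<close>] group_adjacent[OF y x sym[OF \<open>E x y\<close>]]
    by (simp add: insert_commute)
  then show "slot x = slot y"
    unfolding slot_def by simp
next
  assume eq: "slot x = slot y"
  have "x \<in> V" "y \<in> V"
    using x y unfolding off_path_def by auto
  obtain a where a: "a \<in> group x" "slot x = label a"
    using slot_in_group[OF \<open>x \<in> V\<close>] by blast
  obtain b where b: "b \<in> group y" "slot y = label b"
    using slot_in_group[OF \<open>y \<in> V\<close>] by blast
  have "a \<in> V" "b \<in> V"
    using a b group_subset \<open>x \<in> V\<close> \<open>y \<in> V\<close> by auto
  then have "a = b"
    using eq a(2) b(2) label_inj unfolding inj_on_def by auto
  with a b have "a \<in> group x \<inter> group y"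
    by simp
  then consider "a = x" "E y x" | "a = y" "E x y" | "off_path a" "E x a" "E y a"
    using \<open>x \<noteq> y\<close> unfolding group_def by auto
  then show "E x y"
  proof cases
    case 1
    then show ?thesis
      using sym by blast
  next
    case 3
    then show ?thesis
      using off_path_neighbour_unique[OF \<open>off_path a\<close> x y sym[OF \<open>E x a\<close>] sym[OF \<open>E y a\<close>]] \<open>x \<noteq> y\<close>
      by blast
  qed
qed

lemma width_ge: "width \<ge> 2"
  unfolding width_def by simp

lemma slot_width: "v \<in> V \<Longrightarrow> int (slot v) + 2 < width"
  using slot_less unfolding width_def by fastforce

lemma path_shape:
  "k < n \<Longrightarrow> block (ps ! k) = k \<and> offset_lo (ps ! k) = 0 \<and> offset_hi (ps ! k) = width + 1"
  unfolding block_def offset_lo_def offset_hi_def by (simp add: path_index_nth)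

lemma apex_shape:
  "off_path v \<Longrightarrow> apex v \<Longrightarrow> block v = Suc (contact v) \<and> offset_lo v = 0 \<and> offset_hi v = 1"
  unfolding block_def offset_lo_def offset_hi_def off_path_def by simp

lemma pendant_shape:
  "off_path v \<Longrightarrow> \<not> apex v \<Longrightarrow>
    block v = contact v \<and> offset_lo v = 1 + int (slot v) \<and> offset_hi v = 2 + int (slot v)"
  unfolding block_def offset_lo_def offset_hi_def off_path_def by simp

lemma offset_bounds: "v \<in> V \<Longrightarrow> 0 \<le> offset_lo v \<and> offset_lo v < offset_hi v \<and> offset_hi v \<le> width + 1"
  using slot_width[of v] width_ge unfolding offset_lo_def offset_hi_def by auto

definition block_meet :: "'a \<Rightarrow> 'a \<Rightarrow> bool" where
  "block_meet u v \<longleftrightarrow> (block u = block v \<and> offset_lo u < offset_hi v \<and> offset_lo v < offset_hi u) \<or>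
     (block v = Suc (block u) \<and> offset_lo v + width < offset_hi u) \<or>
     (block u = Suc (block v) \<and> offset_lo u + width < offset_hi v)"

lemma lo_hi_meet_iff:
  assumes "u \<in> V" "v \<in> V"
  shows "lo u < hi v \<and> lo v < hi u \<longleftrightarrow> block_meet u v"
proof (cases "block u \<le> block v")
  case True
  then show ?thesis
    using scaled_blocks_meet[OF width_ge _ _ _ _ _ _ True]
      offset_bounds[OF assms(1)] offset_bounds[OF assms(2)]
    unfolding lo_def hi_def block_meet_def by auto
next
  case False
  then have "block v \<le> block u"
    by simp
  then show ?thesis
    using scaled_blocks_meet[OF width_ge _ _ _ _ _ _ \<open>block v \<le> block u\<close>]
      offset_bounds[OF assms(1)] offset_bounds[OF assms(2)]
    unfolding lo_def hi_def block_meet_def by auto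
qed

lemma path_path_meet:
  assumes "k < n" "l < n" "k \<noteq> l"
  shows "E (ps ! k) (ps ! l) \<longleftrightarrow> block_meet (ps ! k) (ps ! l)"
  using path_adj[OF assms(1,2)] path_shape[OF assms(1)] path_shape[OF assms(2)] assms(3) width_ge
  unfolding block_meet_def by auto

lemma path_off_path_meet:
  assumes k: "k < n" and v: "off_path v"
  shows "E (ps ! k) v \<longleftrightarrow> block_meet (ps ! k) v"
proof -
  have "E (ps ! k) v \<longleftrightarrow> k = contact v \<or> (k = Suc (contact v) \<and> apex v)"
    using off_path_neighbours[OF v k] sym by blast
  moreover have "int (slot v) + 2 < width"
    using slot_width v unfolding off_path_def by blast
  ultimately show ?thesis
    using path_shape[OF k] apex_shape[OF v] pendant_shape[OF v] width_ge
    unfolding block_meet_def by (cases "apex v") auto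
qed

lemma off_path_meet:
  assumes u: "off_path u" and v: "off_path v" and "u \<noteq> v"
  shows "E u v \<longleftrightarrow> block_meet u v"
proof -
  have slots: "int (slot u) + 2 < width" "int (slot v) + 2 < width"
    using slot_width u v unfolding off_path_def by blast+
  consider "apex u" "apex v" | "apex u" "\<not> apex v" | "\<not> apex u" "apex v" | "\<not> apex u" "\<not> apex v"
    by blast
  then show ?thesis
  proof cases
    case 1
    then have "contact u \<noteq> contact v"
      using apex_unique[OF u v] \<open>u \<noteq> v\<close> by blast
    then show ?thesis
      using 1 adjacent_off_path[OF u v] apex_shape[OF u] apex_shape[OF v] width_ge
      unfolding block_meet_def by auto
  next
    case 2
    then show ?thesis
      using adjacent_off_path[OF u v] apex_shape[OF u] pendant_shape[OF v] width_ge slots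
      unfolding block_meet_def by auto
  next
    case 3
    then show ?thesis
      using adjacent_off_path[OF u v] pendant_shape[OF u] apex_shape[OF v] width_ge slots
      unfolding block_meet_def by auto
  next
    case 4
    then have "E u v \<longleftrightarrow> contact u = contact v \<and> slot u = slot v"
      using adjacent_off_path[OF u v] slot_eq_iff[OF u v \<open>u \<noteq> v\<close>] by blast
    then show ?thesis
      using 4 pendant_shape[OF u] pendant_shape[OF v] slots
      unfolding block_meet_def by auto
  qed
qed

lemma layout_interval_rep: "interval_rep V E lo hi"
  unfolding interval_rep_def
proof (intro conjI ballI impI)
  fix v assume "v \<in> V"
  then show "lo v < hi v"
    using offset_bounds unfolding lo_def hi_def by auto
next
  have block_meet_sym: "block_meet u v \<longleftrightarrow> block_meet v u" for u v
    unfolding block_meet_def by auto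
  fix u v assume uv: "u \<in> V" "v \<in> V" "u \<noteq> v"
  have "E u v \<longleftrightarrow> block_meet u v"
  proof (cases "u \<in> set ps"; cases "v \<in> set ps")
    assume "u \<in> set ps" "v \<in> set ps"
    then obtain k l where "k < n" "l < n" "u = ps ! k" "v = ps ! l"
      by (auto simp: in_set_conv_nth)
    with uv(3) path_path_meet show ?thesis
      by blast
  next
    assume "u \<in> set ps" "v \<notin> set ps"
    then obtain k where "k < n" "u = ps ! k"
      by (auto simp: in_set_conv_nth)
    with path_off_path_meet uv(2) \<open>v \<notin> set ps\<close> show ?thesis
      unfolding off_path_def by blast
  next
    assume "u \<notin> set ps" "v \<in> set ps"
    then obtain l where "l < n" "v = ps ! l"
      by (auto simp: in_set_conv_nth)
    with path_off_path_meet[of l u] uv(1) \<open>u \<notin> set ps\<close> sym block_meet_sym show ?thesis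
      unfolding off_path_def by blast
  next
    assume "u \<notin> set ps" "v \<notin> set ps"
    with off_path_meet uv show ?thesis
      unfolding off_path_def by blast
  qed
  with lo_hi_meet_iff[OF uv(1,2)] show "E u v \<longleftrightarrow> lo u < hi v \<and> lo v < hi u"
    by simp
qed

end

theorem theorem5p7:
  fixes V :: "'a set" and E :: "'a \<Rightarrow> 'a \<Rightarrow> bool"
  assumes "simple_graph V E" and "cactus V E"
  shows "B0_EPG V E \<longleftrightarrow>
    (\<not> induced_subgraph M2_V M2_E V E \<and> \<not> induced_subgraph M3_V M3_E V E \<and>
     (\<forall>r\<ge>4. \<not> induced_subgraph (cycle_V r) (cycle_E r) V E))"
proof
  assume "B0_EPG V E"
  then show "\<not> induced_subgraph M2_V M2_E V E \<and> \<not> induced_subgraph M3_V M3_E V E \<and>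
     (\<forall>r\<ge>4. \<not> induced_subgraph (cycle_V r) (cycle_E r) V E)"
    by (rule B0_EPG_obstruction_free)
next
  assume "\<not> induced_subgraph M2_V M2_E V E \<and> \<not> induced_subgraph M3_V M3_E V E \<and>
     (\<forall>r\<ge>4. \<not> induced_subgraph (cycle_V r) (cycle_E r) V E)"
  with assms interpret obstruction_free_cactus V E
    by unfold_locales auto
  obtain v where "v \<in> V"
    using cactus unfolding cactus_def graph_connected_def by blast
  then obtain ps where "induced_path V E ps" "ps \<noteq> []"
    "\<And>qs. induced_path V E qs \<Longrightarrow> length qs \<le> length ps"
    using ex_longest_induced_path[OF simple] by metis
  then interpret longest_induced_path V E ps
    by unfold_locales
  obtain label :: "'a \<Rightarrow> nat" and N where "label ` V = {i. i < N}" "inj_on label V"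
    using finite_imp_inj_to_nat_seg[OF simple_graph_finite[OF simple]] by blast
  then interpret path_layout V E ps label N
    by unfold_locales auto
  show "B0_EPG V E"
    using layout_interval_rep by (rule interval_rep_imp_B0_EPG)
qed

end
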